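(* Fix non-negative integers $a\leq b$ and a positive integer $r$, and let $\mu=\frac{a+b}{2r}$. For integers $-1\leq\ell\leq\lfloor(b-a)/r\rfloor$ define $\mu''_\ell=\mu-\frac{\ell+1}{2}$ and $\theta_\ell=\beta_{r,\mu''_\ell}+(\ell+1)(r+a)$. Let $0\leq\ell\leq\lfloor(b-a)/r\rfloor$ be an integer. Then $\theta_\ell<\theta_{\ell-1}$, unless either $\ell=\lfloor(b-a)/r\rfloor$, or $\ell=\lfloor(b-a)/r\rfloor-1$ and $\lfloor\mu''_{\ell-1}\rfloor=\lfloor\mu''_\ell\rfloor$.
   Context: For an integer $r\geq1$ and rational $\mu\geq-1$: $\alpha_\mu=\lfloor\mu\rfloor+1$ and $\beta_{r,\mu}=r\alpha_\mu(2\mu-\alpha_\mu+2)$. (All $\mu''_\ell$ in the stated range satisfy $\mu''_\ell\geq-1$.) *)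

theory Defs
  imports Complex_Main
begin

definition alpha :: "rat \<Rightarrow> int" where
  "alpha \<mu> = \<lfloor>\<mu>\<rfloor> + 1"

definition beta :: "nat \<Rightarrow> rat \<Rightarrow> rat" where
  "beta r \<mu> = of_nat r * of_int (alpha \<mu>) * (2 * \<mu> - of_int (alpha \<mu>) + 2)"

definition muPP :: "nat \<Rightarrow> nat \<Rightarrow> nat \<Rightarrow> int \<Rightarrow> rat" where
  "muPP a b r l = (of_nat a + of_nat b) / (2 * of_nat r) - (of_int l + 1) / 2"

definition theta :: "nat \<Rightarrow> nat \<Rightarrow> nat \<Rightarrow> int \<Rightarrow> rat" where
  "theta a b r l = beta r (muPP a b r l) + (of_int l + 1) * (of_nat r + of_nat a)"

end

theory Submission
  imports Defs
begin

(* Since muPP a b r (l - 1) = muPP a b r l + 1/2, the difference theta (l - 1) - theta l is the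
   increment of beta r under a half-step of its argument mu, minus r + a. That increment is
   r (floor mu + 1) if mu + 1/2 has the same floor as mu and r (2 mu - floor mu + 1) otherwise;
   in both cases it exceeds r (mu + 1/2), and in the second even r (mu + 3/2). On the other
   hand l + j <= (b - a) div r gives a <= r (mu + (1 - j)/2); the excluded cases leave
   j = 2, or j = 1 together with a change of floor, and either suffices. *)

lemma beta_add_half_same_floor:
  assumes "\<lfloor>\<mu> + 1/2\<rfloor> = \<lfloor>\<mu>\<rfloor>"
  shows "beta r (\<mu> + 1/2) = beta r \<mu> + of_nat r * of_int (\<lfloor>\<mu>\<rfloor> + 1)"
  using assms unfolding beta_def alpha_def by (simp add: algebra_simps)

lemma beta_add_half_next_floor:
  assumes "\<lfloor>\<mu> + 1/2\<rfloor> = \<lfloor>\<mu>\<rfloor> + 1"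
  shows "beta r (\<mu> + 1/2) = beta r \<mu> + of_nat r * (2 * \<mu> - of_int \<lfloor>\<mu>\<rfloor> + 1)"
  using assms unfolding beta_def alpha_def by (simp add: algebra_simps)

lemma beta_add_half_gt:
  assumes "r > 0"
  shows "beta r \<mu> + of_nat r * (\<mu> + 1/2) < beta r (\<mu> + 1/2)"
proof -
  have r: "(of_nat r :: rat) > 0" using assms by simp
  have "\<lfloor>\<mu> + 1/2\<rfloor> = \<lfloor>\<mu>\<rfloor> \<or> \<lfloor>\<mu> + 1/2\<rfloor> = \<lfloor>\<mu>\<rfloor> + 1" by linarith
  then show ?thesis
  proof
    assume same: "\<lfloor>\<mu> + 1/2\<rfloor> = \<lfloor>\<mu>\<rfloor>"
    have "\<mu> + 1/2 < of_int (\<lfloor>\<mu>\<rfloor> + 1)" using same by linarith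
    then show ?thesis using beta_add_half_same_floor[OF same] r by simp
  next
    assume next_floor: "\<lfloor>\<mu> + 1/2\<rfloor> = \<lfloor>\<mu>\<rfloor> + 1"
    have "\<mu> + 1/2 < 2 * \<mu> - of_int \<lfloor>\<mu>\<rfloor> + 1" by linarith
    then show ?thesis using beta_add_half_next_floor[OF next_floor] r by simp
  qed
qed

lemma beta_add_half_ge_of_floor_changes:
  assumes "\<lfloor>\<mu> + 1/2\<rfloor> \<noteq> \<lfloor>\<mu>\<rfloor>"
  shows "beta r \<mu> + of_nat r * (\<mu> + 3/2) \<le> beta r (\<mu> + 1/2)"
proof -
  have next_floor: "\<lfloor>\<mu> + 1/2\<rfloor> = \<lfloor>\<mu>\<rfloor> + 1" using assms by linarith
  then have "\<mu> + 3/2 \<le> 2 * \<mu> - of_int \<lfloor>\<mu>\<rfloor> + 1" by linarith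
  then show ?thesis using beta_add_half_next_floor[OF next_floor] by (simp add: mult_left_mono)
qed

lemma muPP_pred: "muPP a b r (l - 1) = muPP a b r l + 1/2"
  unfolding muPP_def by (simp add: field_simps)

lemma theta_pred:
  "theta a b r (l - 1) =
     theta a b r l + (beta r (muPP a b r l + 1/2) - beta r (muPP a b r l)) - (of_nat r + of_nat a)"
  unfolding theta_def muPP_pred by (simp add: algebra_simps)

lemma muPP_lower_bound:
  assumes "r > 0" and "l + j \<le> (int b - int a) div int r"
  shows "of_nat a \<le> of_nat r * (muPP a b r l + (1 - of_int j) / 2)"
proof -
  have "int r * (l + j) \<le> int r * ((int b - int a) div int r)"
    using assms by (intro mult_left_mono) auto
  also have "\<dots> \<le> int b - int a"
    using minus_mod_eq_mult_div[of "int b - int a" "int r"] pos_mod_sign[of "int r" "int b - int a"]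
      assms(1) of_nat_0_less_iff by linarith
  finally have "of_int (int r * (l + j)) \<le> (of_int (int b - int a) :: rat)"
    by (simp only: of_int_le_iff)
  moreover have "of_nat r * (muPP a b r l + (1 - of_int j) / 2)
      = (of_nat a + of_nat b - of_nat r * (of_int l + of_int j)) / (2 :: rat)"
    unfolding muPP_def using assms(1) by (simp add: field_simps)
  ultimately show ?thesis by (simp add: field_simps)
qed

theorem proposition3p8:
  fixes a b r :: nat and l :: int
  assumes "a \<le> b" and "r \<ge> 1"
    and "0 \<le> l" and "l \<le> (int b - int a) div int r"
    and "\<not> (l = (int b - int a) div int r \<or>
             (l = (int b - int a) div int r - 1 \<and>
              \<lfloor>muPP a b r (l - 1)\<rfloor> = \<lfloor>muPP a b r l\<rfloor>))"
  shows "theta a b r l < theta a b r (l - 1)"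
proof -
  define \<mu> where "\<mu> = muPP a b r l"
  have r: "r > 0" using assms(2) by simp
  consider "l + 2 \<le> (int b - int a) div int r"
    | "l + 1 \<le> (int b - int a) div int r" "\<lfloor>\<mu> + 1/2\<rfloor> \<noteq> \<lfloor>\<mu>\<rfloor>"
    using assms(4,5) muPP_pred unfolding \<mu>_def by fastforce
  then show ?thesis
  proof cases
    case 1
    show ?thesis
      using muPP_lower_bound[OF r 1] beta_add_half_gt[OF r, of \<mu>] theta_pred[of a b r l]
      unfolding \<mu>_def by (simp add: algebra_simps)
  next
    case 2
    show ?thesis
      using muPP_lower_bound[OF r 2(1)] beta_add_half_ge_of_floor_changes[OF 2(2), of r]
        theta_pred[of a b r l] r
      unfolding \<mu>_def by (simp add: algebra_simps)
  qed
qed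

end
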